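(* Assume the setup below. Suppose that at time $t_0$ the set $\{\delta X(s,\alpha(t_0)):s\in T\}$ satisfies Condition B at the point $0$ with constants $m_0\ge0$, $\kappa>1$, $\delta>0$, $\sigma>0$, $I_0>0$. Let $0<\eta\le I_0$ and $0<\delta_0<\delta$ with $\nu(G_\eta(t_0))>1-\delta_0$. Then for every $\ell$ with $0<\ell\le\eta$, $$\nu\big(\{s\in T:0\le\delta X(s,\alpha(t_0))<\ell\}\big)<m_0+\delta_0\,(1+\sigma)\left(\frac{\ell}{\eta}\right)^{\log(1+\sigma)/\log\kappa}.$$
   Context: Setup. Fix integers $n\ge1$, $K\ge 2$. $T\subset\mathbb R^n$ is a finite set; each $s\in T$ has a class $i(s)\in\{1,\dots,K\}$ and a weight $\nu(s)\in(0,1]$ with $\sum_{s\in T}\nu(s)=1$; for $A\subset T$, $\nu(A)=\sum_{s\in A}\nu(s)$. A parametrized family $X(\cdot,\alpha):\mathbb R^n\to\mathbb R^K$ is given; $\delta X(s,\alpha)=X_{i(s)}(s,\alpha)-\max_{j\ne i(s)}X_j(s,\alpha)$. A training trajectory is a family of parameters $\alpha(t)$ indexed by times $t$. Good set: $G_\eta(t)=\{s\in T:\delta X(s,\alpha(t))>\eta\}$. For an interval $I\subset\mathbb R$ with center $c$ and $\lambda>0$, $\lambda I=\{c+\lambda(x-c):x\in I\}$; $|I|$ is the length of $I$. Condition B at the point $0$ at time $t_0$ with constants $m_0\ge0$, $\kappa>1$, $\delta>0$, $\sigma>0$, $I_0>0$: for every interval $I\subset\mathbb R$ containing $0$ with $|I|<I_0$,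 $$\nu(\{s\in T:\delta X(s,\alpha(t_0))\in\kappa I\})\ge\min\Big\{\delta,\ \max\big\{m_0,\ (1+\sigma)\,\nu(\{s\in T:\delta X(s,\alpha(t_0))\in I\})\big\}\Big\}.$$ *)

theory Defs
  imports "HOL-Analysis.Analysis"
begin

definition wmeas :: "('a \<Rightarrow> real) \<Rightarrow> 'a set \<Rightarrow> real" where
  "wmeas \<nu> A = (\<Sum>s\<in>A. \<nu> s)"

definition margin :: "('p \<Rightarrow> real^'n \<Rightarrow> real^'k) \<Rightarrow> (real^'n \<Rightarrow> 'k::finite)
    \<Rightarrow> real^'n \<Rightarrow> 'p \<Rightarrow> real" where
  "margin X cls s a = X a s $ cls s - Max {X a s $ j | j. j \<noteq> cls s}"

definition good_set :: "(real^'n) set \<Rightarrow> ('p \<Rightarrow> real^'n \<Rightarrow> real^'k) \<Rightarrow> (real^'n \<Rightarrow> 'k::finite)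
    \<Rightarrow> (real \<Rightarrow> 'p) \<Rightarrow> real \<Rightarrow> real \<Rightarrow> (real^'n) set" where
  "good_set T X cls \<alpha> \<eta> t = {s\<in>T. margin X cls s (\<alpha> t) > \<eta>}"

definition ilen :: "real set \<Rightarrow> real" where
  "ilen I = Sup I - Inf I"

definition icenter :: "real set \<Rightarrow> real" where
  "icenter I = (Sup I + Inf I) / 2"

definition idilate :: "real \<Rightarrow> real set \<Rightarrow> real set" where
  "idilate c I = (\<lambda>x. icenter I + c * (x - icenter I)) ` I"

text \<open>Condition B at the point 0 for the weighted finite family of values f(s), s in T.
  Intervals: nonempty bounded convex subsets of the real line (any endpoint type).\<close>
definition conditionB :: "'a set \<Rightarrow> ('a \<Rightarrow> real) \<Rightarrow> ('a \<Rightarrow> real)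
    \<Rightarrow> real \<Rightarrow> real \<Rightarrow> real \<Rightarrow> real \<Rightarrow> real \<Rightarrow> bool" where
  "conditionB T \<nu> f m0 \<kappa> \<delta> \<sigma> I0 \<longleftrightarrow>
     (\<forall>I::real set. is_interval I \<and> bounded I \<and> 0 \<in> I \<and> ilen I < I0 \<longrightarrow>
        wmeas \<nu> {s\<in>T. f s \<in> idilate \<kappa> I}
          \<ge> min \<delta> (max m0 ((1 + \<sigma>) * wmeas \<nu> {s\<in>T. f s \<in> I})))"

end

theory Submission
  imports Defs
begin

text \<open>Apply Condition B to the half-open intervals \<open>J\<^sub>j = [l/2 - l\<kappa>\<^sup>j/2, l/2 + l\<kappa>\<^sup>j/2)\<close>,
  where \<open>J\<^sub>0 = [0, l)\<close> and \<open>J\<^sub>j\<^sub>+\<^sub>1\<close> is the \<open>\<kappa>\<close>-dilate of \<open>J\<^sub>j\<close>. Take \<open>n\<close> maximal with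
  \<open>l\<kappa>\<^sup>n \<le> \<eta>\<close>. Every \<open>J\<^sub>j\<close> with \<open>j \<le> n\<close> lies below \<open>\<eta>\<close>, so its mass is less than \<open>\<delta>\<^sub>0 < \<delta>\<close>; hence
  the minimum with \<open>\<delta>\<close> in Condition B is never attained and each dilation multiplies the mass
  by at least \<open>1 + \<sigma>\<close>. Thus \<open>(1 + \<sigma>)\<^sup>n \<nu>(J\<^sub>0) < \<delta>\<^sub>0\<close>, and \<open>(1 + \<sigma>)\<^sup>-\<^sup>n\<close> is at most
  \<open>(1 + \<sigma>)(l/\<eta>)\<^bsup>log(1+\<sigma>)/log \<kappa>\<^esup>\<close> because \<open>n > log\<^sub>\<kappa>(\<eta>/l) - 1\<close>.\<close>

lemma wmeas_preimage_mono:
  assumes "finite T" "\<forall>s\<in>T. 0 \<le> \<nu> s" "A \<subseteq> B"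
  shows "wmeas \<nu> {s\<in>T. f s \<in> A} \<le> wmeas \<nu> {s\<in>T. f s \<in> B}"
  unfolding wmeas_def using assms by (intro sum_mono2) auto

lemma wmeas_split_threshold:
  fixes f :: "'a \<Rightarrow> real"
  assumes "finite T"
  shows "wmeas \<nu> T = wmeas \<nu> {s\<in>T. f s \<le> \<eta>} + wmeas \<nu> {s\<in>T. f s > \<eta>}"
proof -
  have "T = {s\<in>T. f s \<le> \<eta>} \<union> {s\<in>T. f s > \<eta>}" by auto
  moreover have "{s\<in>T. f s \<le> \<eta>} \<inter> {s\<in>T. f s > \<eta>} = {}" by auto
  ultimately show ?thesis
    unfolding wmeas_def using assms sum.union_disjoint[of "{s\<in>T. f s \<le> \<eta>}" "{s\<in>T. f s > \<eta>}" \<nu>]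
    by simp
qed

lemma centred_interval_is_interval: "is_interval {c - r..<c + r :: real}"
  unfolding is_interval_1 by auto

lemma ilen_centred_interval: "r > 0 \<Longrightarrow> ilen {c - r..<c + r} = 2 * r"
  by (simp add: ilen_def)

lemma idilate_centred_interval:
  fixes c r k :: real
  assumes r: "r > 0" and k: "k > 0"
  shows "idilate k {c - r..<c + r} = {c - k * r..<c + k * r}"
proof -
  have "icenter {c - r..<c + r} = c" using r by (simp add: icenter_def)
  then have dil: "idilate k {c - r..<c + r} = (\<lambda>x. c + k * (x - c)) ` {c - r..<c + r}"
    by (simp add: idilate_def)
  show ?thesis
    unfolding dil
  proof (intro equalityI subsetI)
    fix y assume "y \<in> (\<lambda>x. c + k * (x - c)) ` {c - r..<c + r}"
    then obtain x where x: "x \<in> {c - r..<c + r}" "y = c + k * (x - c)" by auto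
    have "k * (- r) \<le> k * (x - c)" using x k by (intro mult_left_mono) auto
    moreover have "k * (x - c) < k * r" using x k by (intro mult_strict_left_mono) auto
    ultimately show "y \<in> {c - k * r..<c + k * r}" using x by auto
  next
    fix y assume y: "y \<in> {c - k * r..<c + k * r}"
    have "y = c + k * ((c + (y - c) / k) - c)" using k by simp
    moreover have "c + (y - c) / k \<in> {c - r..<c + r}"
      using y k by (auto simp: field_simps)
    ultimately show "y \<in> (\<lambda>x. c + k * (x - c)) ` {c - r..<c + r}" by blast
  qed
qed

lemma conditionB_dilation_growth:
  fixes f :: "'a \<Rightarrow> real"
  assumes condB: "conditionB T \<nu> f m0 \<kappa> \<delta> \<sigma> I0"
    and T: "finite T" and \<nu>: "\<forall>s\<in>T. 0 \<le> \<nu> s"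
    and \<kappa>: "\<kappa> > 1" and \<sigma>: "\<sigma> > 0" and r: "r > 0" and c: "- r < c" "c \<le> r"
    and small: "2 * r * \<kappa> ^ n \<le> I0"
    and below: "wmeas \<nu> {s\<in>T. f s \<in> {c - r * \<kappa> ^ n..<c + r * \<kappa> ^ n}} < \<delta>"
  shows "(1 + \<sigma>) ^ n * wmeas \<nu> {s\<in>T. f s \<in> {c - r..<c + r}}
           \<le> wmeas \<nu> {s\<in>T. f s \<in> {c - r * \<kappa> ^ n..<c + r * \<kappa> ^ n}}"
proof -
  define \<mu> where "\<mu> j = wmeas \<nu> {s\<in>T. f s \<in> {c - r * \<kappa> ^ j..<c + r * \<kappa> ^ j}}" for j :: nat
  have "(1 + \<sigma>) ^ j * \<mu> 0 \<le> \<mu> j" if "j \<le> n" for j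
    using that
  proof (induction j)
    case 0
    then show ?case by simp
  next
    case (Suc j)
    have pow: "1 \<le> \<kappa> ^ j" "\<kappa> ^ j < \<kappa> ^ n"
      using \<kappa> Suc.prems by (auto intro: power_strict_increasing)
    have rj: "r * \<kappa> ^ j > 0" using r \<kappa> by simp
    have "r \<le> r * \<kappa> ^ j" using pow r by simp
    then have "c - r * \<kappa> ^ j \<le> 0" "0 < c + r * \<kappa> ^ j" using c by linarith+
    then have zero: "0 \<in> {c - r * \<kappa> ^ j..<c + r * \<kappa> ^ j}" by simp
    have "ilen {c - r * \<kappa> ^ j..<c + r * \<kappa> ^ j} < I0"
      using ilen_centred_interval[OF rj] mult_strict_left_mono[OF pow(2) r] small by simp
    moreover have "bounded {c - r * \<kappa> ^ j..<c + r * \<kappa> ^ j}" by simp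
    ultimately
    have "min \<delta> (max m0 ((1 + \<sigma>) * \<mu> j))
            \<le> wmeas \<nu> {s\<in>T. f s \<in> idilate \<kappa> {c - r * \<kappa> ^ j..<c + r * \<kappa> ^ j}}"
      using condB zero centred_interval_is_interval unfolding conditionB_def \<mu>_def by blast
    also have "\<dots> = \<mu> (Suc j)"
      unfolding \<mu>_def idilate_centred_interval[OF rj order.strict_trans[OF zero_less_one \<kappa>]]
      by (simp add: mult.left_commute)
    finally have "min \<delta> (max m0 ((1 + \<sigma>) * \<mu> j)) \<le> \<mu> (Suc j)" .
    moreover have "\<mu> (Suc j) \<le> \<mu> n"
    proof -
      have "r * \<kappa> ^ Suc j \<le> r * \<kappa> ^ n"
        using Suc.prems \<kappa> r by (intro mult_left_mono power_increasing) auto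
      then show ?thesis
        unfolding \<mu>_def by (intro wmeas_preimage_mono[OF T \<nu>]) auto
    qed
    ultimately have "(1 + \<sigma>) * \<mu> j \<le> \<mu> (Suc j)"
      using below unfolding \<mu>_def by linarith
    moreover have "(1 + \<sigma>) * ((1 + \<sigma>) ^ j * \<mu> 0) \<le> (1 + \<sigma>) * \<mu> j"
      using Suc \<sigma> by (intro mult_left_mono) auto
    ultimately show ?case by (simp add: mult.assoc)
  qed
  then show ?thesis unfolding \<mu>_def by simp
qed

lemma power_nat_floor_log_le:
  fixes \<kappa> x :: real
  assumes "\<kappa> > 1" "x \<ge> 1"
  shows "\<kappa> ^ nat \<lfloor>log \<kappa> x\<rfloor> \<le> x"
proof -
  define n where "n = nat \<lfloor>log \<kappa> x\<rfloor>"
  have "real n \<le> log \<kappa> x" unfolding n_def using assms by simp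
  have "\<kappa> ^ n = \<kappa> powr real n" using assms by (simp add: powr_realpow)
  also have "\<dots> \<le> \<kappa> powr log \<kappa> x"
    using assms \<open>real n \<le> log \<kappa> x\<close> by (intro powr_mono) auto
  also have "\<dots> = x" using assms by simp
  finally show ?thesis unfolding n_def .
qed

lemma inverse_power_nat_floor_log_le:
  fixes a \<kappa> x :: real
  assumes a: "a \<ge> 1" and \<kappa>: "\<kappa> > 1" and x: "x \<ge> 1"
  shows "1 / a ^ nat \<lfloor>log \<kappa> x\<rfloor> \<le> a * (1 / x) powr (ln a / ln \<kappa>)"
proof -
  define n where "n = nat \<lfloor>log \<kappa> x\<rfloor>"
  have "log \<kappa> x < real n + 1" unfolding n_def using \<kappa> x by linarith
  have "(1 / x) powr (ln a / ln \<kappa>) = exp (ln a * - log \<kappa> x)"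
    using x \<kappa> by (simp add: powr_def log_def ln_div)
  also have "\<dots> = a powr (- log \<kappa> x)" using a by (simp add: powr_def mult.commute)
  finally have "(1 / x) powr (ln a / ln \<kappa>) = a powr (- log \<kappa> x)" .
  moreover have "a powr (- (real n + 1)) \<le> a powr (- log \<kappa> x)"
    using a \<open>log \<kappa> x < real n + 1\<close> by (intro powr_mono) auto
  moreover have "a * a powr (- (real n + 1)) = 1 / a ^ n"
  proof -
    have "a powr (- (real n + 1)) = 1 / a powr real (Suc n)"
      by (metis powr_minus_divide of_nat_Suc add.commute)
    also have "\<dots> = 1 / a ^ Suc n" using a by (simp only: powr_realpow)
    finally show ?thesis using a by simp
  qed
  ultimately have "1 / a ^ n \<le> a * (1 / x) powr (ln a / ln \<kappa>)"
    using a by (metis mult_left_mono zero_le_one order.trans)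
  then show ?thesis unfolding n_def .
qed

theorem mainTheorem7:
  fixes T :: "(real^'n) set"
    and cls :: "real^'n \<Rightarrow> 'k::finite"
    and \<nu> :: "real^'n \<Rightarrow> real"
    and X :: "'p \<Rightarrow> real^'n \<Rightarrow> real^'k"
    and \<alpha> :: "real \<Rightarrow> 'p"
    and t0 m0 \<kappa> \<delta> \<sigma> I0 \<eta> \<delta>0 :: real
  assumes K: "CARD('k) \<ge> 2"
    and T_fin: "finite T"
    and \<nu>_pos: "\<forall>s\<in>T. 0 < \<nu> s \<and> \<nu> s \<le> 1"
    and \<nu>_sum: "wmeas \<nu> T = 1"
    and condB: "conditionB T \<nu> (\<lambda>s. margin X cls s (\<alpha> t0)) m0 \<kappa> \<delta> \<sigma> I0"
    and m0: "m0 \<ge> 0" and \<kappa>: "\<kappa> > 1" and \<delta>: "\<delta> > 0" and \<sigma>: "\<sigma> > 0" and I0: "I0 > 0"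
    and \<eta>: "0 < \<eta>" "\<eta> \<le> I0"
    and \<delta>0: "0 < \<delta>0" "\<delta>0 < \<delta>"
    and good: "wmeas \<nu> (good_set T X cls \<alpha> \<eta> t0) > 1 - \<delta>0"
  shows "\<forall>l. 0 < l \<and> l \<le> \<eta> \<longrightarrow>
      wmeas \<nu> {s\<in>T. 0 \<le> margin X cls s (\<alpha> t0) \<and> margin X cls s (\<alpha> t0) < l}
        < m0 + \<delta>0 * (1 + \<sigma>) * (l / \<eta>) powr (ln (1 + \<sigma>) / ln \<kappa>)"
proof (intro allI impI)
  fix l :: real assume l: "0 < l \<and> l \<le> \<eta>"
  define f where "f s = margin X cls s (\<alpha> t0)" for s
  define n where "n = nat \<lfloor>log \<kappa> (\<eta> / l)\<rfloor>"
  define \<mu>\<^sub>n where "\<mu>\<^sub>n = wmeas \<nu> {s\<in>T. f s \<in> {l/2 - l/2 * \<kappa> ^ n..<l/2 + l/2 * \<kappa> ^ n}}"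
  have \<nu>_nonneg: "\<forall>s\<in>T. 0 \<le> \<nu> s" using \<nu>_pos by auto
  have "l * \<kappa> ^ n \<le> \<eta>"
    using power_nat_floor_log_le[OF \<kappa>, of "\<eta> / l"] l unfolding n_def by (simp add: field_simps)
  moreover have "l \<le> l * \<kappa> ^ n" using l \<kappa> by simp
  ultimately have "{l/2 - l/2 * \<kappa> ^ n..<l/2 + l/2 * \<kappa> ^ n} \<subseteq> {..\<eta>}" by auto
  then have "\<mu>\<^sub>n \<le> wmeas \<nu> {s\<in>T. f s \<in> {..\<eta>}}"
    unfolding \<mu>\<^sub>n_def by (rule wmeas_preimage_mono[OF T_fin \<nu>_nonneg])
  also have "\<dots> = wmeas \<nu> {s\<in>T. f s \<le> \<eta>}" by simp
  also have "\<dots> < \<delta>0"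
    using wmeas_split_threshold[OF T_fin, of \<nu> f \<eta>] \<nu>_sum good
    unfolding good_set_def f_def by linarith
  finally have "\<mu>\<^sub>n < \<delta>0" .
  moreover have "(1 + \<sigma>) ^ n * wmeas \<nu> {s\<in>T. 0 \<le> f s \<and> f s < l} \<le> \<mu>\<^sub>n"
    using conditionB_dilation_growth[OF condB[folded f_def] T_fin \<nu>_nonneg \<kappa> \<sigma>, of "l/2" "l/2" n]
      l \<eta> \<open>l * \<kappa> ^ n \<le> \<eta>\<close> \<delta>0 \<open>\<mu>\<^sub>n < \<delta>0\<close> unfolding \<mu>\<^sub>n_def by (simp add: atLeastLessThan_def)
  ultimately have "wmeas \<nu> {s\<in>T. 0 \<le> f s \<and> f s < l} < \<delta>0 * (1 / (1 + \<sigma>) ^ n)"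
    using \<sigma> by (simp add: field_simps)
  also have "\<dots> \<le> \<delta>0 * ((1 + \<sigma>) * (l / \<eta>) powr (ln (1 + \<sigma>) / ln \<kappa>))"
    using inverse_power_nat_floor_log_le[of "1 + \<sigma>" \<kappa> "\<eta> / l"] \<sigma> \<kappa> l \<delta>0
    unfolding n_def by (intro mult_left_mono) auto
  finally show "wmeas \<nu> {s\<in>T. 0 \<le> margin X cls s (\<alpha> t0) \<and> margin X cls s (\<alpha> t0) < l}
        < m0 + \<delta>0 * (1 + \<sigma>) * (l / \<eta>) powr (ln (1 + \<sigma>) / ln \<kappa>)"
    using m0 unfolding f_def by (simp add: mult.assoc)
qed

end
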